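(* Let $(\mathbb T,o)\in\mathcal T$ and consider the TASEP on $\mathbb T$ started from the all-empty configuration, where $n$ particles are generated at the root according to an arbitrary rule. Assume (UE) holds with some $\varepsilon>0$. Then for all $m\in\mathbb N$, $$P_{\mathbb T}\big(z^m_i\ne z^m_j\ \text{for all }i,j\in\{1,\dots,n\},\,i\ne j\big)\ge1-n^2\Big(\frac1{1+\varepsilon}\Big)^{F_n(m)},$$ where $$F_n(m):=\begin{cases}\min\{F(o,x):x\in\mathcal Z_m\}-n,& d_{\mathbb T}=1,\\ m-\lceil n(d_{\mathbb T}-1)^{-1}\rceil,& d_{\mathbb T}\ge2.\end{cases}$$
   Context: $\mathcal T$: infinite, locally finite rooted trees $\mathbb T=(V,E,o)$ with edges directed from parent to child; $\mathcal Z_m$ the $m$-th generation. TASEP: a particle at $x$ jumps to a child $y$ at rate $r_{x,y}$ if $y$ is empty (positive, uniformly bounded rates); $P_{\mathbb T}$ its law. (UE): $r_{x,y}/r_{x,z}\ge\varepsilon$ for all $(x,y),(x,z)\in E$, some $\varepsilon\in(0,1]$. $z^m_i\in\mathcal Z_m$ is the unique site of generation $m$ visited by the $i$-th particle to enter the tree. $[o,x]$ is the set of vertices on the path from $o$ to $x$; $F(o,x):=|\{z\in[o,x]\setminus\{x\}:\deg(z)\ge3\}|$, where $\deg$ is the degree in the (undirected) tree. $d_{\mathbb T}$ is the smallest number of children of a vertex of $\mathbb T$. *)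

theory Defs
  imports "HOL-Probability.Probability"
begin

definition children :: "('v \<times> 'v) set \<Rightarrow> 'v \<Rightarrow> 'v set" where
  "children E x = {y. (x, y) \<in> E}"

definition rooted_tree :: "'v set \<Rightarrow> ('v \<times> 'v) set \<Rightarrow> 'v \<Rightarrow> bool" where
  "rooted_tree V E rt \<longleftrightarrow>
     rt \<in> V \<and> E \<subseteq> V \<times> V \<and> (\<forall>x. (x, rt) \<notin> E) \<and>
     (\<forall>y\<in>V - {rt}. \<exists>!x. (x, y) \<in> E) \<and>
     (\<forall>y\<in>V. (rt, y) \<in> E\<^sup>*) \<and>
     (\<forall>x\<in>V. finite (children E x)) \<and> infinite V"

definition Zgen :: "('v \<times> 'v) set \<Rightarrow> 'v \<Rightarrow> nat \<Rightarrow> 'v set" where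
  "Zgen E rt m = {x. (rt, x) \<in> E ^^ m}"

definition path_set :: "('v \<times> 'v) set \<Rightarrow> 'v \<Rightarrow> 'v \<Rightarrow> 'v set" where
  "path_set E rt x = {z. (rt, z) \<in> E\<^sup>* \<and> (z, x) \<in> E\<^sup>*}"

text \<open>Degree in the undirected tree.\<close>
definition udeg :: "('v \<times> 'v) set \<Rightarrow> 'v \<Rightarrow> 'v \<Rightarrow> nat" where
  "udeg E rt z = card (children E z) + (if z = rt then 0 else 1)"

definition Fbr :: "('v \<times> 'v) set \<Rightarrow> 'v \<Rightarrow> 'v \<Rightarrow> nat" where
  "Fbr E rt x = card {z \<in> path_set E rt x. z \<noteq> x \<and> udeg E rt z \<ge> 3}"

definition dmin :: "'v set \<Rightarrow> ('v \<times> 'v) set \<Rightarrow> nat" where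
  "dmin V E = (LEAST k. \<exists>x\<in>V. card (children E x) = k)"

definition Fn :: "'v set \<Rightarrow> ('v \<times> 'v) set \<Rightarrow> 'v \<Rightarrow> nat \<Rightarrow> nat \<Rightarrow> int" where
  "Fn V E rt n m =
     (if dmin V E = 1 then int (Min (Fbr E rt ` Zgen E rt m)) - int n
      else int m - \<lceil>real n / real (dmin V E - 1)\<rceil>)"

text \<open>A configuration is a list s of positions: s!i is the position of the
 (i+1)-st particle to have entered the tree. A history is a list of
 configurations, the current one at the head.\<close>

definition moves :: "('v \<times> 'v) set \<Rightarrow> 'v list \<Rightarrow> (nat \<times> 'v) set" where
  "moves E s = {(i, y). i < length s \<and> (s ! i, y) \<in> E \<and> y \<notin> set s}"

definition move_pmf :: "('v \<times> 'v) set \<Rightarrow> ('v \<Rightarrow> 'v \<Rightarrow> real) \<Rightarrow> 'v list \<Rightarrow> 'v list pmf" where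
  "move_pmf E r s =
     map_pmf (\<lambda>(i, y). s[i := y])
       (embed_pmf (\<lambda>(i, y). if (i, y) \<in> moves E s
                           then r (s ! i) y / (\<Sum>(j, z)\<in>moves E s. r (s ! j) z) else 0))"

text \<open>The insertion rule ins gives, as a function of the whole
 history, the probability that the next event is the insertion of a new particle at the root
 (only possible when the root is empty and fewer than n particles have entered).\<close>
definition tasep_step :: "('v \<times> 'v) set \<Rightarrow> ('v \<Rightarrow> 'v \<Rightarrow> real) \<Rightarrow> 'v \<Rightarrow> nat \<Rightarrow>
    ('v list list \<Rightarrow> real) \<Rightarrow> 'v list list \<Rightarrow> 'v list list pmf" where
  "tasep_step E r rt n ins h =
     (let s = hd h in
      bind_pmf (bernoulli_pmf (if length s < n \<and> rt \<notin> set s then ins h else 0))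
        (\<lambda>b. if b then return_pmf ((s @ [rt]) # h)
             else if moves E s = {} then return_pmf (s # h)
             else map_pmf (\<lambda>s'. s' # h) (move_pmf E r s)))"

primrec tasep_run :: "('v \<times> 'v) set \<Rightarrow> ('v \<Rightarrow> 'v \<Rightarrow> real) \<Rightarrow> 'v \<Rightarrow> nat \<Rightarrow>
    ('v list list \<Rightarrow> real) \<Rightarrow> nat \<Rightarrow> 'v list list pmf" where
  "tasep_run E r rt n ins 0 = return_pmf [[]]"
| "tasep_run E r rt n ins (Suc N) = bind_pmf (tasep_run E r rt n ins N) (tasep_step E r rt n ins)"

definition visits :: "'v list list \<Rightarrow> nat \<Rightarrow> 'v \<Rightarrow> bool" where
  "visits h i x \<longleftrightarrow> (\<exists>s\<in>set h. i < length s \<and> s ! i = x)"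

definition distinct_gen :: "('v \<times> 'v) set \<Rightarrow> 'v \<Rightarrow> nat \<Rightarrow> nat \<Rightarrow> 'v list list \<Rightarrow> bool" where
  "distinct_gen E rt n m h \<longleftrightarrow>
     (\<forall>i<n. \<forall>j<n. i \<noteq> j \<longrightarrow> \<not> (\<exists>x\<in>Zgen E rt m. visits h i x \<and> visits h j x))"

end

theory Submission
  imports Defs
begin

text \<open>
  Fix particles i < j. Particles cannot overtake, so i and j visit a common vertex of
  generation m only if j follows i down the line of ancestors of the position of i. The
  function Phi i j bounds the conditional probability of this event given the current
  configuration, and it is a supermartingale for the jump chain. When j, trailing i, sits
  at a penalised vertex v, either some child of v other than the child c towards i is
  free, and then by (UE) the jump there, after which i and j can never meet, is at least
  \<epsilon> times as likely as the jump to c, which raises Phi by a factor at most 1 + \<epsilon>;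
  or the D other children of v are occupied, and the particles on them can no longer
  block j further down. Hence i and j meet with probability at most
  Q powr (pot rt - block (n - 2)) with Q = 1 / (1 + \<epsilon>), and a union bound over the
  pairs gives the factor n^2. For d_T \<ge> 2 every vertex is penalised, pot x = m - depth x
  and block a = a div (d_T - 1); for d_T = 1 the penalised vertices are the branching
  ones and pot x is the least number of them on a path from x down to generation m.
\<close>

lemma sum_weighted_le:
  fixes w g :: "'a \<Rightarrow> real"
  assumes M: "finite M" "K \<subseteq> M" and w: "\<And>x. x \<in> M \<Longrightarrow> 0 \<le> w x" "sum w M = 1"
    and K: "(\<Sum>x\<in>K. w x * g x) \<le> (\<Sum>x\<in>K. w x) * c"
    and rest: "\<And>x. x \<in> M - K \<Longrightarrow> g x \<le> c"
  shows "(\<Sum>x\<in>M. w x * g x) \<le> c"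
proof -
  have "(\<Sum>x\<in>M - K. w x * g x) \<le> (\<Sum>x\<in>M - K. w x * c)"
    using rest w(1) by (intro sum_mono mult_left_mono) auto
  then have "(\<Sum>x\<in>M - K. w x * g x) + (\<Sum>x\<in>K. w x * g x) \<le> (\<Sum>x\<in>M - K. w x) * c + (\<Sum>x\<in>K. w x) * c"
    using K by (simp add: sum_distrib_right)
  also have "\<dots> = c"
    using sum.subset_diff[OF M(2,1), of w] w(2) by (simp add: distrib_right[symmetric])
  finally show ?thesis
    using sum.subset_diff[OF M(2,1), of "\<lambda>x. w x * g x"] by simp
qed

lemma card_indices_in:
  assumes "distinct s" "C \<subseteq> set s"
  shows "card {q. q < length s \<and> s ! q \<in> C} = card C"
proof (rule bij_betw_same_card)
  show "bij_betw (nth s) {q. q < length s \<and> s ! q \<in> C} C"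
  proof (rule bij_betw_imageI)
    show "inj_on (nth s) {q. q < length s \<and> s ! q \<in> C}"
      using assms(1) by (auto intro: inj_onI simp: nth_eq_iff_index_eq)
    show "nth s ` {q. q < length s \<and> s ! q \<in> C} = C"
      using assms(2) by (auto simp: image_iff in_set_conv_nth) (metis in_set_conv_nth subsetD)
  qed
qed

section \<open>Rooted trees\<close>

locale leafless_tree =
  fixes V :: "'v set" and E :: "('v \<times> 'v) set" and rt :: 'v
  assumes tree: "rooted_tree V E rt"
    and no_leaves: "\<forall>x\<in>V. children E x \<noteq> {}"
begin

abbreviation ancestor :: "'v \<Rightarrow> 'v \<Rightarrow> bool" where
  "ancestor x y \<equiv> (x, y) \<in> E\<^sup>*"

lemma root_in_V: "rt \<in> V"
  using tree by (simp add: rooted_tree_def)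

lemma edge_in_V: "(x, y) \<in> E \<Longrightarrow> x \<in> V \<and> y \<in> V"
  using tree by (auto simp: rooted_tree_def)

lemma no_edge_to_root: "(x, rt) \<notin> E"
  using tree by (simp add: rooted_tree_def)

lemma parent_unique: "(x, y) \<in> E \<Longrightarrow> (x', y) \<in> E \<Longrightarrow> x = x'"
proof -
  assume edges: "(x, y) \<in> E" "(x', y) \<in> E"
  then have "y \<in> V - {rt}"
    using edge_in_V no_edge_to_root by blast
  then have "\<exists>!x. (x, y) \<in> E"
    using tree by (simp add: rooted_tree_def)
  then show ?thesis
    using edges by blast
qed

lemma finite_children: "x \<in> V \<Longrightarrow> finite (children E x)"
  using tree by (simp add: rooted_tree_def)

lemma ancestor_root: "x \<in> V \<Longrightarrow> ancestor rt x"
  using tree by (simp add: rooted_tree_def)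

lemma ancestor_in_V: "ancestor x y \<Longrightarrow> x \<in> V \<Longrightarrow> y \<in> V"
  by (induction rule: rtrancl_induct) (auto dest: edge_in_V)

lemma ancestor_in_V': "ancestor x y \<Longrightarrow> y \<in> V \<Longrightarrow> x \<in> V"
  by (metis converse_rtranclE edge_in_V)

lemma ancestor_of_root: "ancestor x rt \<Longrightarrow> x = rt"
  by (metis no_edge_to_root rtranclE)

lemma ancestor_of_child: "(v, c) \<in> E \<Longrightarrow> ancestor z c \<Longrightarrow> z = c \<or> ancestor z v"
  by (metis parent_unique rtranclE)

lemma ancestor_first_step: "ancestor x y \<Longrightarrow> x \<noteq> y \<Longrightarrow> \<exists>c. (x, c) \<in> E \<and> ancestor c y"
  by (metis converse_rtranclE)

lemma ancestors_comparable: "ancestor x y \<Longrightarrow> ancestor z y \<Longrightarrow> ancestor x z \<or> ancestor z x"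
proof (induction arbitrary: z rule: rtrancl_induct)
  case base
  then show ?case by simp
next
  case (step y' y)
  show ?case
  proof (cases "z = y")
    case True
    with step show ?thesis by (meson rtrancl.rtrancl_into_rtrancl)
  next
    case False
    with step.prems have "ancestor z y'"
      using ancestor_of_child[OF step.hyps(2)] by blast
    with step.IH show ?thesis by blast
  qed
qed

lemma relpow_root_unique: "(rt, y) \<in> E ^^ k \<Longrightarrow> (rt, y) \<in> E ^^ l \<Longrightarrow> k = l"
proof (induction k arbitrary: y l)
  case 0
  then show ?case
    using no_edge_to_root by (cases l) (auto elim: relpow_Suc_E)
next
  case (Suc k)
  from Suc.prems(1) obtain z where z: "(rt, z) \<in> E ^^ k" "(z, y) \<in> E"
    by (auto elim: relpow_Suc_E)
  show ?case
  proof (cases l)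
    case 0
    with Suc.prems z show ?thesis
      using no_edge_to_root by auto
  next
    case (Suc l')
    with Suc.prems(2) obtain z' where z': "(rt, z') \<in> E ^^ l'" "(z', y) \<in> E"
      by (auto elim: relpow_Suc_E)
    have "z = z'"
      using parent_unique z z' by blast
    with Suc.IH z z' \<open>l = Suc l'\<close> show ?thesis by blast
  qed
qed

definition depth :: "'v \<Rightarrow> nat" where
  "depth x = (THE k. (rt, x) \<in> E ^^ k)"

lemma depth_eq: "(rt, x) \<in> E ^^ k \<Longrightarrow> depth x = k"
  unfolding depth_def using relpow_root_unique by blast

lemma depth_root [simp]: "depth rt = 0"
  by (rule depth_eq) simp

lemma relpow_depth: "x \<in> V \<Longrightarrow> (rt, x) \<in> E ^^ depth x"
  by (metis ancestor_root depth_eq rtrancl_power)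

lemma depth_relpow: "x \<in> V \<Longrightarrow> (x, y) \<in> E ^^ k \<Longrightarrow> depth y = depth x + k"
  by (metis relcomp.relcompI relpow_add relpow_depth depth_eq)

lemma depth_edge: "(x, y) \<in> E \<Longrightarrow> depth y = Suc (depth x)"
  using depth_relpow[of x y 1] edge_in_V by auto

lemma depth_mono: "ancestor x y \<Longrightarrow> x \<in> V \<Longrightarrow> depth x \<le> depth y"
  by (metis depth_relpow le_add1 rtrancl_power)

lemma ancestor_depth_eq: "ancestor x y \<Longrightarrow> x \<in> V \<Longrightarrow> depth x = depth y \<Longrightarrow> x = y"
  by (metis add_cancel_left_right depth_relpow relpow_0_E rtrancl_power)

lemma ancestor_antisym: "ancestor x y \<Longrightarrow> ancestor y x \<Longrightarrow> x \<in> V \<Longrightarrow> x = y"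
  by (meson ancestor_depth_eq ancestor_in_V depth_mono le_antisym)

lemma sibling_towards_unique:
  "(v, a) \<in> E \<Longrightarrow> (v, b) \<in> E \<Longrightarrow> ancestor a u \<Longrightarrow> ancestor b u \<Longrightarrow> a = b"
  by (metis ancestor_depth_eq ancestors_comparable depth_edge edge_in_V)

definition level :: "nat \<Rightarrow> 'v set" where
  "level m = {x \<in> V. depth x = m}"

lemma Zgen_eq_level: "Zgen E rt m = level m"
  unfolding Zgen_def level_def
  using depth_eq relpow_depth ancestor_in_V rtrancl_power root_in_V by blast

lemma finite_level: "finite (level m)"
proof (induction m)
  case 0
  have "level 0 = {rt}"
    unfolding level_def using relpow_depth root_in_V by fastforce
  then show ?case by simp
next
  case (Suc m)
  have "level (Suc m) \<subseteq> (\<Union>x\<in>level m. children E x)"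
  proof
    fix y assume "y \<in> level (Suc m)"
    then have "(rt, y) \<in> E ^^ Suc m"
      unfolding level_def using relpow_depth by force
    then obtain x where "(rt, x) \<in> E ^^ m" "(x, y) \<in> E"
      by (auto elim: relpow_Suc_E)
    moreover have "x \<in> level m"
      using calculation edge_in_V depth_eq by (auto simp: level_def)
    ultimately show "y \<in> (\<Union>x\<in>level m. children E x)"
      by (auto simp: children_def)
  qed
  moreover have "finite (\<Union>x\<in>level m. children E x)"
    using Suc finite_children by (auto simp: level_def)
  ultimately show ?case
    by (rule finite_subset)
qed

lemma relpow_from: "x \<in> V \<Longrightarrow> \<exists>y. (x, y) \<in> E ^^ k"
proof (induction k)
  case (Suc k)
  then obtain y where y: "(x, y) \<in> E ^^ k" by blast
  then have "y \<in> V"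
    using ancestor_in_V relpow_imp_rtrancl Suc.prems by blast
  then obtain z where "(y, z) \<in> E"
    using no_leaves by (auto simp: children_def)
  with y show ?case by auto
qed simp

lemma level_below: "x \<in> V \<Longrightarrow> depth x \<le> m \<Longrightarrow> \<exists>y\<in>level m. ancestor x y"
proof -
  assume x: "x \<in> V" "depth x \<le> m"
  then obtain y where y: "(x, y) \<in> E ^^ (m - depth x)"
    using relpow_from by blast
  then have "depth y = m"
    using depth_relpow x by simp
  moreover have "y \<in> V"
    using ancestor_in_V relpow_imp_rtrancl y x by blast
  ultimately show ?thesis
    using y relpow_imp_rtrancl unfolding level_def by blast
qed

lemma finite_ancestors: "finite {z. ancestor z x}"
proof (cases "x \<in> V")
  case True
  have "inj_on depth {z. ancestor z x}"
    by (rule inj_onI) (metis True ancestor_depth_eq ancestor_in_V' ancestors_comparable mem_Collect_eq)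
  moreover have "depth ` {z. ancestor z x} \<subseteq> {..depth x}"
    using True ancestor_in_V' depth_mono by auto
  ultimately show ?thesis
    using finite_imageD finite_subset by blast
next
  case False
  then have "{z. ancestor z x} = {x}"
    using edge_in_V by (auto elim: rtranclE)
  then show ?thesis by simp
qed

lemma dmin_le: "x \<in> V \<Longrightarrow> dmin V E \<le> card (children E x)"
  unfolding dmin_def by (rule Least_le) blast

lemma dmin_pos: "0 < dmin V E"
proof -
  have "\<exists>x\<in>V. card (children E x) = dmin V E"
    unfolding dmin_def by (rule LeastI_ex) (use root_in_V in blast)
  then obtain x where x: "x \<in> V" "card (children E x) = dmin V E" ..
  then show ?thesis
    using no_leaves finite_children card_gt_0_iff by metis
qed

definition branching :: "'v \<Rightarrow> bool" where
  "branching z \<longleftrightarrow> 3 \<le> udeg E rt z"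

definition branch_count :: "'v \<Rightarrow> 'v \<Rightarrow> nat" where
  "branch_count x y = card {z. ancestor x z \<and> ancestor z y \<and> z \<noteq> y \<and> branching z}"

definition branch_pot :: "nat \<Rightarrow> 'v \<Rightarrow> nat" where
  "branch_pot m x = Min (branch_count x ` {y \<in> level m. ancestor x y})"

lemma branch_pot_le: "y \<in> level m \<Longrightarrow> ancestor x y \<Longrightarrow> branch_pot m x \<le> branch_count x y"
  unfolding branch_pot_def using finite_level by (intro Min_le) auto

lemma branch_pot_attained:
  assumes "x \<in> V" "depth x \<le> m"
  shows "\<exists>y\<in>level m. ancestor x y \<and> branch_pot m x = branch_count x y"
proof -
  have "{y \<in> level m. ancestor x y} \<noteq> {}"
    using level_below assms by blast
  then have "branch_pot m x \<in> branch_count x ` {y \<in> level m. ancestor x y}"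
    unfolding branch_pot_def using finite_level by (intro Min_in) auto
  then show ?thesis
    by auto
qed

lemma branch_count_edge:
  assumes edge: "(x, c) \<in> E" and y: "ancestor c y"
  shows "branch_count x y \<le> branch_count c y + (if branching x then 1 else 0)"
proof -
  define A where "A = {z. ancestor c z \<and> ancestor z y \<and> z \<noteq> y \<and> branching z}"
  have "{z. ancestor x z \<and> ancestor z y \<and> z \<noteq> y \<and> branching z} \<subseteq> (if branching x then insert x A else A)"
  proof
    fix z assume "z \<in> {z. ancestor x z \<and> ancestor z y \<and> z \<noteq> y \<and> branching z}"
    then have z: "ancestor x z" "ancestor z y" "z \<noteq> y" "branching z"
      by auto
    show "z \<in> (if branching x then insert x A else A)"
    proof (cases "z = x")
      case False
      then obtain c' where c': "(x, c') \<in> E" "ancestor c' z"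
        using ancestor_first_step z(1) by blast
      have "ancestor c' y"
        using c'(2) z(2) by (rule rtrancl_trans)
      then have "c' = c"
        using sibling_towards_unique[OF c'(1) edge _ y] by blast
      with c' z show ?thesis
        by (simp add: A_def)
    qed (use z in simp)
  qed
  moreover have "finite A"
    unfolding A_def by (rule finite_subset[OF _ finite_ancestors[of y]]) auto
  ultimately have "branch_count x y \<le> card (if branching x then insert x A else A)"
    unfolding branch_count_def by (intro card_mono) simp_all
  also have "\<dots> \<le> card A + (if branching x then 1 else 0)"
    using \<open>finite A\<close> by (simp add: card_insert_if)
  finally show ?thesis
    by (simp add: branch_count_def A_def)
qed

lemma branch_pot_edge:
  assumes "x \<in> V" "depth x < m" "(x, c) \<in> E"
  shows "branch_pot m x \<le> branch_pot m c + (if branching x then 1 else 0)"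
proof -
  have "c \<in> V" "depth c \<le> m"
    using assms edge_in_V depth_edge by auto
  then obtain y where y: "y \<in> level m" "ancestor c y" "branch_pot m c = branch_count c y"
    using branch_pot_attained by blast
  have "branch_pot m x \<le> branch_count x y"
    using y assms(3) by (intro branch_pot_le) (auto intro: converse_rtrancl_into_rtrancl)
  also have "\<dots> \<le> branch_pot m c + (if branching x then 1 else 0)"
    using branch_count_edge[OF assms(3) y(2)] y(3) by simp
  finally show ?thesis .
qed

lemma branch_pot_level:
  assumes x: "x \<in> level m"
  shows "branch_pot m x = 0"
proof -
  have "{z. ancestor x z \<and> ancestor z x \<and> z \<noteq> x \<and> branching z} = {}"
    using x ancestor_antisym by (auto simp: level_def)
  then have "branch_count x x = 0"
    unfolding branch_count_def by (simp only: card.empty)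
  then show ?thesis
    using branch_pot_le[OF x, of x] by simp
qed

lemma Min_Fbr_eq_branch_pot: "Min (Fbr E rt ` Zgen E rt m) = branch_pot m rt"
proof -
  have "Fbr E rt y = branch_count rt y" for y
    unfolding Fbr_def branch_count_def path_set_def branching_def by (rule arg_cong[where f = card]) auto
  moreover have "{y \<in> level m. ancestor rt y} = level m"
    using ancestor_root by (auto simp: level_def)
  ultimately show ?thesis
    by (simp add: branch_pot_def Zgen_eq_level)
qed

end

section \<open>The jump chain\<close>

locale tasep = leafless_tree V E rt for V :: "'v set" and E rt +
  fixes r :: "'v \<Rightarrow> 'v \<Rightarrow> real" and n :: nat
  assumes rates_pos: "\<forall>(x, y)\<in>E. r x y > 0"
begin

definition admissible :: "'v list \<Rightarrow> bool" where
  "admissible s \<longleftrightarrow> distinct s \<and> set s \<subseteq> V \<and> length s \<le> n \<and>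
     (\<forall>a b. a < b \<longrightarrow> b < length s \<longrightarrow> \<not> ancestor (s ! a) (s ! b))"

definition admissible_history :: "'v list list \<Rightarrow> bool" where
  "admissible_history h \<longleftrightarrow> h \<noteq> [] \<and> admissible (hd h) \<and>
     (\<forall>p x. visits h p x \<longrightarrow> p < length (hd h) \<and> ancestor x (hd h ! p))"

definition transition :: "'v list \<Rightarrow> 'v list \<Rightarrow> bool" where
  "transition s s' \<longleftrightarrow> s' = s \<or> (length s < n \<and> rt \<notin> set s \<and> s' = s @ [rt]) \<or>
     (\<exists>x\<in>moves E s. s' = s[fst x := snd x])"

definition jump_prob :: "'v list \<Rightarrow> nat \<times> 'v \<Rightarrow> real" where
  "jump_prob s = (\<lambda>(i, y). if (i, y) \<in> moves E s
                            then r (s ! i) y / (\<Sum>(j, z)\<in>moves E s. r (s ! j) z) else 0)"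

lemma rate_pos: "(x, y) \<in> E \<Longrightarrow> 0 < r x y"
  using rates_pos by auto

lemma movesD: "(i, y) \<in> moves E s \<Longrightarrow> i < length s \<and> (s ! i, y) \<in> E \<and> y \<notin> set s"
  by (simp add: moves_def)

lemma admissible_nth_in_V: "admissible s \<Longrightarrow> p < length s \<Longrightarrow> s ! p \<in> V"
  using nth_mem by (auto simp: admissible_def)

lemma finite_moves: "admissible s \<Longrightarrow> finite (moves E s)"
proof -
  assume s: "admissible s"
  have "moves E s \<subseteq> Sigma {..<length s} (\<lambda>i. children E (s ! i))"
    by (auto simp: moves_def children_def)
  moreover have "finite (Sigma {..<length s} (\<lambda>i. children E (s ! i)))"
    using s admissible_nth_in_V finite_children by blast
  ultimately show ?thesis
    by (rule finite_subset)
qed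

lemma total_rate_pos: "admissible s \<Longrightarrow> moves E s \<noteq> {} \<Longrightarrow> 0 < (\<Sum>(j, z)\<in>moves E s. r (s ! j) z)"
  using finite_moves by (intro sum_pos) (auto simp: moves_def intro: rate_pos)

lemma jump_prob_move:
  "(i, y) \<in> moves E s \<Longrightarrow> jump_prob s (i, y) = r (s ! i) y / (\<Sum>(j, z)\<in>moves E s. r (s ! j) z)"
  by (simp add: jump_prob_def)

lemma jump_prob_not_move: "x \<notin> moves E s \<Longrightarrow> jump_prob s x = 0"
  by (cases x) (auto simp: jump_prob_def)

lemma jump_prob_nonneg:
  assumes s: "admissible s"
  shows "0 \<le> jump_prob s x"
proof (cases "x \<in> moves E s")
  case True
  obtain i y where x: "x = (i, y)"
    by (cases x)
  have "0 < r (s ! i) y"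
    using True x movesD rate_pos by blast
  moreover have "0 < (\<Sum>(j, z)\<in>moves E s. r (s ! j) z)"
    using total_rate_pos[OF s] True by blast
  ultimately show ?thesis
    using True x by (simp add: jump_prob_def)
qed (simp add: jump_prob_not_move)

lemma sum_jump_prob: "admissible s \<Longrightarrow> moves E s \<noteq> {} \<Longrightarrow> (\<Sum>x\<in>moves E s. jump_prob s x) = 1"
proof -
  assume s: "admissible s" "moves E s \<noteq> {}"
  let ?R = "\<Sum>(j, z)\<in>moves E s. r (s ! j) z"
  have "(\<Sum>x\<in>moves E s. jump_prob s x) = (\<Sum>x\<in>moves E s. (case x of (j, z) \<Rightarrow> r (s ! j) z) / ?R)"
    by (intro sum.cong) (auto simp: jump_prob_def)
  also have "\<dots> = ?R / ?R"
    by (rule sum_divide_distrib[symmetric])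
  also have "\<dots> = 1"
    using total_rate_pos[OF s] by simp
  finally show ?thesis .
qed

lemma nn_integral_jump_prob:
  assumes "admissible s" "moves E s \<noteq> {}"
  shows "(\<integral>\<^sup>+x. ennreal (jump_prob s x) \<partial>count_space UNIV) = 1"
proof -
  have "(\<integral>\<^sup>+x. ennreal (jump_prob s x) \<partial>count_space UNIV) = (\<Sum>x\<in>moves E s. ennreal (jump_prob s x))"
    using finite_moves[OF assms(1)] jump_prob_not_move by (intro nn_integral_count_space') auto
  also have "\<dots> = ennreal (\<Sum>x\<in>moves E s. jump_prob s x)"
    using jump_prob_nonneg[OF assms(1)] by (simp add: sum_ennreal)
  finally show ?thesis
    using sum_jump_prob[OF assms] by simp
qed

lemma pmf_jump_prob: "admissible s \<Longrightarrow> moves E s \<noteq> {} \<Longrightarrow> pmf (embed_pmf (jump_prob s)) x = jump_prob s x"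
  using pmf_embed_pmf[of "jump_prob s"] jump_prob_nonneg nn_integral_jump_prob by blast

lemma set_pmf_jump_prob: "admissible s \<Longrightarrow> moves E s \<noteq> {} \<Longrightarrow> set_pmf (embed_pmf (jump_prob s)) \<subseteq> moves E s"
  using set_embed_pmf[of "jump_prob s"] jump_prob_nonneg nn_integral_jump_prob jump_prob_not_move by blast

lemma move_pmf_eq: "move_pmf E r s = map_pmf (\<lambda>(i, y). s[i := y]) (embed_pmf (jump_prob s))"
  unfolding move_pmf_def jump_prob_def by simp

lemma nn_integral_move_pmf:
  assumes s: "admissible s" "moves E s \<noteq> {}" and nonneg: "\<And>s. 0 \<le> f s"
  shows "(\<integral>\<^sup>+s'. ennreal (f s') \<partial>move_pmf E r s)
           = ennreal (\<Sum>x\<in>moves E s. jump_prob s x * f (s[fst x := snd x]))"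
proof -
  have "(\<integral>\<^sup>+s'. ennreal (f s') \<partial>move_pmf E r s)
      = (\<Sum>x\<in>moves E s. ennreal (f (s[fst x := snd x])) * pmf (embed_pmf (jump_prob s)) x)"
    unfolding move_pmf_eq nn_integral_map_pmf split_beta
    using finite_moves[OF s(1)] set_pmf_jump_prob[OF s]
    by (intro nn_integral_measure_pmf_support) (auto simp: set_pmf_iff)
  also have "\<dots> = (\<Sum>x\<in>moves E s. ennreal (jump_prob s x * f (s[fst x := snd x])))"
    using pmf_jump_prob[OF s] jump_prob_nonneg[OF s(1)] nonneg
    by (intro sum.cong) (auto simp: ennreal_mult' mult.commute)
  also have "\<dots> = ennreal (\<Sum>x\<in>moves E s. jump_prob s x * f (s[fst x := snd x]))"
    using jump_prob_nonneg[OF s(1)] nonneg by (intro sum_ennreal) auto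
  finally show ?thesis .
qed

lemma insertion_allowed: "True \<in> set_pmf (bernoulli_pmf (if P then p else 0)) \<Longrightarrow> P"
  by (cases P) (auto simp: set_pmf_iff)

lemma tasep_step_eq:
  "tasep_step E r rt n ins h =
     bind_pmf (bernoulli_pmf (if length (hd h) < n \<and> rt \<notin> set (hd h) then ins h else 0))
       (\<lambda>b. if b then return_pmf ((hd h @ [rt]) # h)
            else if moves E (hd h) = {} then return_pmf (hd h # h)
            else map_pmf (\<lambda>s'. s' # h) (move_pmf E r (hd h)))"
  by (simp add: tasep_step_def Let_def)

lemma set_pmf_tasep_step:
  assumes s: "admissible (hd h)" and h': "h' \<in> set_pmf (tasep_step E r rt n ins h)"
  shows "\<exists>s'. h' = s' # h \<and> transition (hd h) s'"
proof -
  define s where "s = hd h"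
  from h' obtain b where b: "b \<in> set_pmf (bernoulli_pmf (if length s < n \<and> rt \<notin> set s then ins h else 0))"
    and h'b: "h' \<in> set_pmf (if b then return_pmf ((s @ [rt]) # h)
                             else if moves E s = {} then return_pmf (s # h)
                             else map_pmf (\<lambda>s'. s' # h) (move_pmf E r s))"
    unfolding tasep_step_eq s_def by auto
  show ?thesis
  proof (cases b)
    case True
    then have "length s < n \<and> rt \<notin> set s"
      using b True insertion_allowed by metis
    with True h'b show ?thesis
      by (auto simp: transition_def s_def)
  next
    case False
    show ?thesis
    proof (cases "moves E s = {}")
      case True
      with False h'b show ?thesis
        by (auto simp: transition_def s_def)
    next
      case moves: False
      with False h'b obtain i y where "(i, y) \<in> set_pmf (embed_pmf (jump_prob s))" "h' = s[i := y] # h"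
        by (auto simp: move_pmf_eq)
      with set_pmf_jump_prob[OF s[folded s_def] moves] show ?thesis
        unfolding transition_def s_def[symmetric] by force
    qed
  qed
qed

lemma admissible_insert:
  assumes s: "admissible s" and insert: "length s < n" "rt \<notin> set s"
  shows "admissible (s @ [rt])"
proof -
  have "\<not> ancestor ((s @ [rt]) ! a) ((s @ [rt]) ! b)" if "a < b" "b < Suc (length s)" for a b
  proof (cases "b < length s")
    case True
    with that s show ?thesis
      by (simp add: admissible_def nth_append)
  next
    case False
    with that have "(s @ [rt]) ! b = rt" "(s @ [rt]) ! a \<in> set s"
      by (auto simp: nth_append)
    then show ?thesis
      using insert ancestor_of_root by metis
  qed
  with insert s root_in_V show ?thesis
    by (auto simp: admissible_def)
qed

lemma admissible_jump:
  assumes s: "admissible s" and move: "(i, y) \<in> moves E s"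
  shows "admissible (s[i := y])"
proof -
  note edge = movesD[OF move]
  have "\<not> ancestor (s[i := y] ! a) (s[i := y] ! b)" if "a < b" "b < length s" for a b
  proof -
    have not_anc: "\<not> ancestor (s ! a) (s ! b)"
      using s that by (simp add: admissible_def)
    consider (first) "a = i" | (second) "b = i" | (neither) "a \<noteq> i" "b \<noteq> i"
      by blast
    then show ?thesis
    proof cases
      case first
      then have "\<not> ancestor y (s ! b)"
        using not_anc edge by (meson converse_rtrancl_into_rtrancl)
      with first that edge show ?thesis
        by simp
    next
      case second
      have "\<not> ancestor (s ! a) y"
      proof
        assume "ancestor (s ! a) y"
        then have "s ! a = y \<or> ancestor (s ! a) (s ! i)"
          using ancestor_of_child edge by blast
        then show False
          using not_anc second edge that by auto
      qed
      with second that edge show ?thesis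
        by simp
    next
      case neither
      with not_anc show ?thesis
        by simp
    qed
  qed
  moreover have "distinct (s[i := y])"
    using s edge by (auto simp: admissible_def intro!: distinct_list_update)
  moreover have "set (s[i := y]) \<subseteq> V"
    using s edge edge_in_V set_update_subset_insert[of s i y] by (auto simp: admissible_def)
  ultimately show ?thesis
    using s by (simp add: admissible_def)
qed

lemma admissible_transition: "admissible s \<Longrightarrow> transition s s' \<Longrightarrow> admissible s'"
  unfolding transition_def using admissible_insert admissible_jump by auto

lemma transition_ancestor:
  "transition s s' \<Longrightarrow> p < length s \<Longrightarrow> length s \<le> length s' \<and> ancestor (s ! p) (s' ! p)"
  unfolding transition_def by (auto simp: nth_append nth_list_update moves_def)

lemma admissible_history_step:
  assumes h: "admissible_history h" and t: "transition (hd h) s'"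
  shows "admissible_history (s' # h)"
proof -
  have "p < length s' \<and> ancestor x (s' ! p)" if "visits (s' # h) p x" for p x
  proof -
    from that have "(p < length s' \<and> s' ! p = x) \<or> visits h p x"
      by (auto simp: visits_def)
    then show ?thesis
    proof
      assume "visits h p x"
      then have "p < length (hd h)" "ancestor x (hd h ! p)"
        using h by (auto simp: admissible_history_def)
      then show ?thesis
        using transition_ancestor[OF t] by (meson order_less_le_trans rtrancl_trans)
    qed auto
  qed
  moreover have "admissible s'"
    using h t admissible_transition by (auto simp: admissible_history_def)
  ultimately show ?thesis
    by (auto simp: admissible_history_def)
qed

lemma admissible_history_run: "h \<in> set_pmf (tasep_run E r rt n ins N) \<Longrightarrow> admissible_history h"
proof (induction N arbitrary: h)
  case 0
  then show ?case
    by (auto simp: admissible_history_def admissible_def visits_def)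
next
  case (Suc N)
  then obtain h0 where h0: "h0 \<in> set_pmf (tasep_run E r rt n ins N)" "h \<in> set_pmf (tasep_step E r rt n ins h0)"
    by auto
  have h0_adm: "admissible_history h0"
    using Suc.IH h0(1) by blast
  then have "admissible (hd h0)"
    by (simp add: admissible_history_def)
  with h0(2) obtain s' where "h = s' # h0" "transition (hd h0) s'"
    using set_pmf_tasep_step by blast
  with h0_adm show ?case
    using admissible_history_step by blast
qed

lemma nn_integral_tasep_step_le:
  assumes s: "admissible (hd h)" and nonneg: "\<And>s. 0 \<le> f s"
    and insert_le: "length (hd h) < n \<Longrightarrow> rt \<notin> set (hd h) \<Longrightarrow> f (hd h @ [rt]) \<le> f (hd h)"
    and jump_le: "moves E (hd h) \<noteq> {} \<Longrightarrow>
       (\<Sum>x\<in>moves E (hd h). jump_prob (hd h) x * f ((hd h)[fst x := snd x])) \<le> f (hd h)"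
  shows "(\<integral>\<^sup>+h'. ennreal (f (hd h')) \<partial>tasep_step E r rt n ins h) \<le> ennreal (f (hd h))"
proof -
  define s where "s = hd h"
  let ?p = "if length s < n \<and> rt \<notin> set s then ins h else 0"
  let ?next = "\<lambda>b. if b then return_pmf ((s @ [rt]) # h)
                   else if moves E s = {} then return_pmf (s # h)
                   else map_pmf (\<lambda>s'. s' # h) (move_pmf E r s)"
  have next_le: "(\<integral>\<^sup>+h'. ennreal (f (hd h')) \<partial>?next b) \<le> ennreal (f s)"
    if b: "b \<in> set_pmf (bernoulli_pmf ?p)" for b
  proof (cases b)
    case True
    then have "length s < n \<and> rt \<notin> set s"
      using b insertion_allowed by metis
    with True insert_le show ?thesis
      by (simp add: s_def ennreal_leI)
  next
    case False
    show ?thesis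
    proof (cases "moves E s = {}")
      case moves: False
      have "(\<integral>\<^sup>+h'. ennreal (f (hd h')) \<partial>?next b) = (\<integral>\<^sup>+s'. ennreal (f s') \<partial>move_pmf E r s)"
        using False moves by simp
      also have "\<dots> = ennreal (\<Sum>x\<in>moves E s. jump_prob s x * f (s[fst x := snd x]))"
        using s moves nonneg unfolding s_def by (rule nn_integral_move_pmf)
      also have "\<dots> \<le> ennreal (f s)"
        using jump_le moves unfolding s_def by (simp add: ennreal_leI)
      finally show ?thesis .
    qed (use False in simp)
  qed
  have "(\<integral>\<^sup>+h'. ennreal (f (hd h')) \<partial>tasep_step E r rt n ins h)
      = (\<integral>\<^sup>+b. (\<integral>\<^sup>+h'. ennreal (f (hd h')) \<partial>?next b) \<partial>bernoulli_pmf ?p)"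
    unfolding tasep_step_eq s_def by (rule nn_integral_bind_pmf)
  also have "\<dots> \<le> (\<integral>\<^sup>+b. ennreal (f s) \<partial>bernoulli_pmf ?p)"
    using next_le by (intro nn_integral_mono_AE) (simp add: AE_measure_pmf_iff)
  also have "\<dots> = ennreal (f (hd h))"
    by (simp add: s_def measure_pmf.emeasure_space_1)
  finally show ?thesis .
qed

context
  fixes f :: "'v list \<Rightarrow> real"
  assumes nonneg: "\<And>s. 0 \<le> f s"
    and insert_le: "\<And>s. admissible s \<Longrightarrow> length s < n \<Longrightarrow> rt \<notin> set s \<Longrightarrow> f (s @ [rt]) \<le> f s"
    and jump_le: "\<And>s. admissible s \<Longrightarrow> moves E s \<noteq> {} \<Longrightarrow>
       (\<Sum>x\<in>moves E s. jump_prob s x * f (s[fst x := snd x])) \<le> f s"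
begin

lemma nn_integral_tasep_run_le:
  "(\<integral>\<^sup>+h. ennreal (f (hd h)) \<partial>tasep_run E r rt n ins N) \<le> ennreal (f [])"
proof (induction N)
  case (Suc N)
  have "(\<integral>\<^sup>+h. ennreal (f (hd h)) \<partial>tasep_run E r rt n ins (Suc N))
     = (\<integral>\<^sup>+h. (\<integral>\<^sup>+h'. ennreal (f (hd h')) \<partial>tasep_step E r rt n ins h) \<partial>tasep_run E r rt n ins N)"
    by simp
  also have "\<dots> \<le> (\<integral>\<^sup>+h. ennreal (f (hd h)) \<partial>tasep_run E r rt n ins N)"
  proof (intro nn_integral_mono_AE, unfold AE_measure_pmf_iff, intro ballI)
    fix h assume "h \<in> set_pmf (tasep_run E r rt n ins N)"
    then have h: "admissible (hd h)"
      using admissible_history_run by (simp add: admissible_history_def)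
    show "(\<integral>\<^sup>+h'. ennreal (f (hd h')) \<partial>tasep_step E r rt n ins h) \<le> ennreal (f (hd h))"
      using h nonneg insert_le[OF h] jump_le[OF h] by (rule nn_integral_tasep_step_le)
  qed
  also have "\<dots> \<le> ennreal (f [])"
    by (rule Suc.IH)
  finally show ?case .
qed simp

lemma prob_tasep_run_le:
  assumes "\<And>s. admissible s \<Longrightarrow> A s \<Longrightarrow> 1 \<le> f s"
  shows "measure_pmf.prob (tasep_run E r rt n ins N) {h. A (hd h)} \<le> f []"
proof -
  let ?M = "measure_pmf (tasep_run E r rt n ins N)"
  have "ennreal (measure ?M {h. A (hd h)}) = (\<integral>\<^sup>+h. indicator {h. A (hd h)} h \<partial>?M)"
    by (simp add: measure_pmf.emeasure_eq_measure[symmetric])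
  also have "\<dots> \<le> (\<integral>\<^sup>+h. ennreal (f (hd h)) \<partial>?M)"
    using admissible_history_run assms nonneg
    by (intro nn_integral_mono_AE) (auto simp: AE_measure_pmf_iff admissible_history_def indicator_def)
  also have "\<dots> \<le> ennreal (f [])"
    by (rule nn_integral_tasep_run_le)
  finally show ?thesis
    using nonneg by (simp add: ennreal_le_iff)
qed

end

end

section \<open>A supermartingale for a pair of particles\<close>

locale tasep_ue = tasep V E rt r n for V :: "'v set" and E rt r n +
  fixes \<epsilon> :: real
  assumes eps_pos: "0 < \<epsilon>"
    and UE: "\<forall>x y z. (x, y) \<in> E \<longrightarrow> (x, z) \<in> E \<longrightarrow> r x y / r x z \<ge> \<epsilon>"
begin

definition Q :: real where
  "Q = 1 / (1 + \<epsilon>)"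

lemma Q_pos: "0 < Q"
  using eps_pos by (simp add: Q_def)

lemma Q_powr_antimono: "a \<le> b \<Longrightarrow> Q powr b \<le> Q powr a"
  using Q_pos eps_pos by (intro powr_mono') (auto simp: Q_def)

lemma Q_powr_diff_1: "Q powr (a - 1) = (1 + \<epsilon>) * Q powr a"
  using Q_pos eps_pos by (simp add: powr_diff Q_def)

lemma jump_prob_ratio:
  assumes s: "admissible s" and moves: "(j, a) \<in> moves E s" "(j, b) \<in> moves E s"
  shows "\<epsilon> * jump_prob s (j, a) \<le> jump_prob s (j, b)"
proof -
  have edges: "(s ! j, a) \<in> E" "(s ! j, b) \<in> E"
    using moves movesD by auto
  then have "\<epsilon> \<le> r (s ! j) b / r (s ! j) a"
    using UE by blast
  then have "\<epsilon> * r (s ! j) a \<le> r (s ! j) b"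
    using rate_pos[OF edges(1)] by (simp add: pos_le_divide_eq)
  then have "\<epsilon> * r (s ! j) a / (\<Sum>(j, z)\<in>moves E s. r (s ! j) z) \<le> r (s ! j) b / (\<Sum>(j, z)\<in>moves E s. r (s ! j) z)"
    using total_rate_pos[OF s] moves by (intro divide_right_mono) (auto intro: less_imp_le)
  then show ?thesis
    using moves by (simp add: jump_prob_move)
qed

end

(* pot x is a lower bound for the number of penalised vertices that a particle at x passes
   before generation m. A penalised vertex has D spare children, and block a bounds the number
   of penalised vertices that a particles can block. *)
locale branching_potential = tasep_ue V E rt r n \<epsilon> for V :: "'v set" and E rt r n \<epsilon> +
  fixes m :: nat and pot :: "'v \<Rightarrow> int" and penalised :: "'v \<Rightarrow> bool"
    and D :: nat and block :: "nat \<Rightarrow> int"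
  assumes pot_edge: "x \<in> V \<Longrightarrow> depth x < m \<Longrightarrow> (x, c) \<in> E \<Longrightarrow>
      pot x - (if penalised x then 1 else 0) \<le> pot c"
    and pot_level: "x \<in> level m \<Longrightarrow> pot x \<le> 0"
    and penalised_children: "x \<in> V \<Longrightarrow> depth x < m \<Longrightarrow> penalised x \<Longrightarrow> D + 1 \<le> card (children E x)"
    and block_mono: "a \<le> b \<Longrightarrow> block a \<le> block b"
    and block_nonneg: "0 \<le> block a"
    and block_drop: "D \<le> a \<Longrightarrow> block (a - D) + 1 \<le> block a"
begin

(* A particle that has not entered yet is treated as waiting at the root. *)
definition pos :: "nat \<Rightarrow> 'v list \<Rightarrow> 'v" where
  "pos j s = (if j < length s then s ! j else rt)"

(* The particles other than i and j that may still occupy a child of a vertex on the way of j: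
   those not yet inserted and those on the line of descent through the position of j. *)
definition blockers :: "nat \<Rightarrow> nat \<Rightarrow> 'v list \<Rightarrow> nat set" where
  "blockers i j s = {p. p < n \<and> p \<noteq> i \<and> p \<noteq> j \<and>
     (length s \<le> p \<or> ancestor (s ! p) (pos j s) \<or> ancestor (pos j s) (s ! p))}"

definition exponent :: "nat \<Rightarrow> nat \<Rightarrow> 'v list \<Rightarrow> int" where
  "exponent i j s = pot (pos j s) - block (card (blockers i j s))"

definition met :: "nat \<Rightarrow> nat \<Rightarrow> 'v list \<Rightarrow> bool" where
  "met i j s \<longleftrightarrow> j < length s \<and> (\<exists>x\<in>level m. ancestor x (s ! i) \<and> ancestor x (s ! j))"

definition trails :: "nat \<Rightarrow> nat \<Rightarrow> 'v list \<Rightarrow> bool" where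
  "trails i j s \<longleftrightarrow> length s \<le> j \<or> (depth (s ! j) < m \<and> ancestor (s ! j) (s ! i) \<and> s ! j \<noteq> s ! i)"

(* An upper bound for the conditional probability that i and j meet at generation m. *)
definition Phi :: "nat \<Rightarrow> nat \<Rightarrow> 'v list \<Rightarrow> real" where
  "Phi i j s = (if met i j s then 1 else if trails i j s then Q powr exponent i j s else 0)"

lemma Phi_nonneg: "0 \<le> Phi i j s"
  using Q_pos by (simp add: Phi_def)

lemma Phi_le_Q_powr: "(met i j s \<Longrightarrow> exponent i j s \<le> 0) \<Longrightarrow> Phi i j s \<le> Q powr exponent i j s"
  using Q_powr_antimono[of "exponent i j s" 0] Q_pos by (auto simp: Phi_def)

lemma Phi_leI:
  assumes "met i j s' \<longleftrightarrow> met i j s" "trails i j s' \<Longrightarrow> trails i j s" "exponent i j s \<le> exponent i j s'"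
  shows "Phi i j s' \<le> Phi i j s"
  using assms Q_powr_antimono Q_pos by (auto simp: Phi_def)

context
  fixes i j
  assumes ij: "i < j" "j < n"
begin

lemma finite_blockers: "finite (blockers i j s)"
  by (rule finite_subset[of _ "{..<n}"]) (auto simp: blockers_def)

lemma blockers_root:
  assumes "admissible s" "pos j s = rt"
  shows "blockers i j s = {..<n} - {i, j}"
  using assms admissible_nth_in_V ancestor_root by (auto simp: blockers_def)

lemma met_transition: "transition s s' \<Longrightarrow> met i j s \<Longrightarrow> met i j s'"
  using transition_ancestor[of s s' i] transition_ancestor[of s s' j] ij
  by (auto simp: met_def intro: rtrancl_trans)

lemma Phi_initial: "Phi i j [] = Q powr (pot rt - block (n - 2))"
proof -
  have "card ({..<n} - {i, j}) = n - 2"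
    using ij by (subst card_Diff_subset) auto
  then show ?thesis
    using blockers_root[of "[]"] by (simp add: Phi_def met_def trails_def exponent_def pos_def admissible_def)
qed

lemma Phi_insert:
  assumes s: "admissible s" and ins: "length s < n" "rt \<notin> set s"
  shows "Phi i j (s @ [rt]) \<le> Phi i j s"
proof (cases "j < length s")
  case True
  have same: "pos j (s @ [rt]) = pos j s" "met i j (s @ [rt]) = met i j s" "trails i j (s @ [rt]) = trails i j s"
    using True ij by (auto simp: pos_def met_def trails_def nth_append)
  have "blockers i j (s @ [rt]) \<subseteq> blockers i j s"
    using same(1) by (auto simp: blockers_def nth_append split: if_splits)
  then have "exponent i j s \<le> exponent i j (s @ [rt])"
    using same(1) finite_blockers by (simp add: exponent_def block_mono card_mono)
  with same show ?thesis
    by (intro Phi_leI) auto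
next
  case False
  have s': "admissible (s @ [rt])"
    using s ins by (rule admissible_insert)
  have roots: "pos j s = rt" "pos j (s @ [rt]) = rt"
    using False by (auto simp: pos_def nth_append)
  then have same: "exponent i j (s @ [rt]) = exponent i j s"
    using blockers_root s s' by (simp add: exponent_def)
  have "exponent i j (s @ [rt]) \<le> 0" if "met i j (s @ [rt])"
  proof -
    from that obtain x where "x \<in> level m" "ancestor x (pos j (s @ [rt]))"
      by (auto simp: met_def pos_def)
    then have "rt \<in> level m"
      using roots ancestor_of_root by auto
    then have "pot rt \<le> 0"
      by (rule pot_level)
    moreover have "0 \<le> block (card (blockers i j (s @ [rt])))"
      by (rule block_nonneg)
    ultimately show ?thesis
      using roots by (simp add: exponent_def)
  qed
  then have "Phi i j (s @ [rt]) \<le> Q powr exponent i j s"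
    using same Phi_le_Q_powr by metis
  also have "\<dots> = Phi i j s"
    using False by (simp add: Phi_def met_def trails_def)
  finally show ?thesis .
qed

lemma pos_jump_other: "p \<noteq> j \<Longrightarrow> pos j (s[p := y]) = pos j s"
  by (simp add: pos_def)

lemma blockers_jump:
  assumes move: "(p, y) \<in> moves E s"
  shows "blockers i j (s[p := y]) \<subseteq> blockers i j s"
proof
  fix q assume q: "q \<in> blockers i j (s[p := y])"
  note edge = movesD[OF move]
  show "q \<in> blockers i j s"
  proof (cases "p = j")
    case True
    with q have q': "q \<noteq> j" "length s \<le> q \<or> ancestor (s ! q) y \<or> ancestor y (s ! q)"
      using edge by (auto simp: blockers_def pos_def)
    have "s ! q \<noteq> y" if "q < length s"
      using edge that nth_mem by metis
    then have "length s \<le> q \<or> ancestor (s ! q) (s ! j) \<or> ancestor (s ! j) (s ! q)"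
      using q'(2) edge True ancestor_of_child[of "s ! j" y "s ! q"]
      by (auto intro: converse_rtrancl_into_rtrancl)
    with q show ?thesis
      using edge True by (simp add: blockers_def pos_def)
  next
    case False
    define v where "v = pos j s"
    have "v \<noteq> y"
      using edge no_edge_to_root nth_mem unfolding v_def pos_def by metis
    have "length s \<le> q \<or> ancestor (s ! q) v \<or> ancestor v (s ! q)"
    proof (cases "q = p")
      case True
      with q edge pos_jump_other[OF False] have "ancestor y v \<or> ancestor v y"
        by (auto simp: blockers_def v_def)
      then show ?thesis
        using True edge \<open>v \<noteq> y\<close> ancestor_of_child[of "s ! p" y v]
        by (auto intro: converse_rtrancl_into_rtrancl)
    qed (use q pos_jump_other[OF False] in \<open>auto simp: blockers_def v_def\<close>)
    with q show ?thesis
      by (simp add: blockers_def v_def)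
  qed
qed

lemma exponent_jump_other:
  "(p, y) \<in> moves E s \<Longrightarrow> p \<noteq> j \<Longrightarrow> exponent i j s \<le> exponent i j (s[p := y])"
  using blockers_jump finite_blockers pos_jump_other
  by (simp add: exponent_def block_mono card_mono)

lemma met_jump_other:
  assumes s: "admissible s" and move: "(p, y) \<in> moves E s" and pj: "p \<noteq> j"
    and met': "met i j (s[p := y])"
  shows "met i j s"
proof (cases "p = i")
  case True
  note edge = movesD[OF move]
  from met' True pj obtain x where x: "x \<in> level m" "ancestor x y" "ancestor x (s ! j)" "j < length s"
    using edge by (auto simp: met_def)
  have "\<not> ancestor (s ! i) (s ! j)"
    using s ij x(4) by (auto simp: admissible_def)
  then have "x \<noteq> y"
    using x(3) edge True by (meson converse_rtrancl_into_rtrancl)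
  then have "ancestor x (s ! i)"
    using x(2) edge True ancestor_of_child by blast
  with x show ?thesis
    by (auto simp: met_def)
qed (use met' pj in \<open>auto simp: met_def\<close>)

lemma trails_jump_other:
  assumes s: "admissible s" and move: "(p, y) \<in> moves E s" and pj: "p \<noteq> j"
    and trails': "trails i j (s[p := y])"
  shows "trails i j s"
proof (cases "p = i \<and> j < length s")
  case True
  note edge = movesD[OF move]
  with trails' True pj have v: "depth (s ! j) < m" "ancestor (s ! j) y" "s ! j \<noteq> y"
    by (auto simp: trails_def)
  then have "ancestor (s ! j) (s ! i)"
    using edge True ancestor_of_child by blast
  moreover have "s ! j \<noteq> s ! i"
    using s ij True by (auto simp: admissible_def nth_eq_iff_index_eq)
  ultimately show ?thesis
    using v by (simp add: trails_def)
qed (use trails' pj in \<open>auto simp: trails_def\<close>)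

lemma Phi_jump_other:
  assumes s: "admissible s" and move: "(p, y) \<in> moves E s" and pj: "p \<noteq> j"
  shows "Phi i j (s[p := y]) \<le> Phi i j s"
proof (rule Phi_leI)
  have "transition s (s[p := y])"
    using move unfolding transition_def by force
  then show "met i j (s[p := y]) \<longleftrightarrow> met i j s"
    using met_transition met_jump_other[OF s move pj] by blast
qed (use trails_jump_other[OF s move pj] exponent_jump_other[OF move pj] in auto)

lemma blockers_jump_occupied:
  assumes s: "admissible s" and move: "(j, y) \<in> moves E s" and toward: "ancestor y (s ! i)"
    and occupied: "children E (s ! j) - {y} \<subseteq> set s"
  shows "card (blockers i j (s[j := y])) + card (children E (s ! j) - {y}) \<le> card (blockers i j s)"
proof -
  define v where "v = s ! j"
  define B where "B = {q. q < length s \<and> s ! q \<in> children E v - {y}}"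
  note edge = movesD[OF move]
  have sibling: "(v, s ! q) \<in> E" "s ! q \<noteq> y" "depth (s ! q) = depth y" "s ! q \<in> V" if "q \<in> B" for q
    using that edge edge_in_V depth_edge by (auto simp: B_def v_def children_def)
  have y: "y \<in> V" "pos j (s[j := y]) = y" "pos j s = v"
    using edge edge_in_V by (auto simp: pos_def v_def)
  have "B \<subseteq> blockers i j s"
  proof
    fix q assume q: "q \<in> B"
    have "q \<noteq> j"
      using sibling(3)[OF q] edge depth_edge by (auto simp: v_def)
    moreover have "q \<noteq> i"
      using sibling[OF q] toward ancestor_depth_eq[OF _ \<open>y \<in> V\<close>] by force
    moreover have "q < n"
      using q s by (auto simp: B_def admissible_def)
    ultimately show "q \<in> blockers i j s"
      using sibling(1)[OF q] y by (auto simp: blockers_def)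
  qed
  moreover have "B \<inter> blockers i j (s[j := y]) = {}"
  proof (intro equals0I)
    fix q assume q: "q \<in> B \<inter> blockers i j (s[j := y])"
    then have "q \<noteq> j" "q < length s"
      by (auto simp: blockers_def B_def)
    with q y have "ancestor (s ! q) y \<or> ancestor y (s ! q)"
      by (auto simp: blockers_def)
    then show False
      using sibling[of q] q ancestor_depth_eq[OF _ \<open>y \<in> V\<close>] ancestor_depth_eq[of "s ! q" y] by force
  qed
  ultimately have "card (blockers i j (s[j := y])) + card B \<le> card (blockers i j s)"
    using blockers_jump[OF move] finite_blockers
    by (metis Int_commute card_Un_disjoint card_mono finite_subset le_sup_iff)
  moreover have "card B = card (children E v - {y})"
    unfolding B_def using s occupied by (intro card_indices_in) (auto simp: admissible_def v_def)
  ultimately show ?thesis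
    by (simp add: v_def)
qed

lemma exponent_jump_toward:
  assumes s: "admissible s" and move: "(j, y) \<in> moves E s" and depth: "depth (s ! j) < m"
    and toward: "ancestor y (s ! i)"
  shows "exponent i j s - (if penalised (s ! j) \<and> \<not> children E (s ! j) - {y} \<subseteq> set s then 1 else 0)
           \<le> exponent i j (s[j := y])"
proof -
  define v where "v = s ! j"
  note edge = movesD[OF move]
  have v: "v \<in> V" "pos j s = v" "pos j (s[j := y]) = y"
    using edge edge_in_V by (auto simp: v_def pos_def)
  have pot: "pot v - (if penalised v then 1 else 0) \<le> pot y"
    using pot_edge v depth edge by (simp add: v_def)
  let ?b = "card (blockers i j s)" and ?b' = "card (blockers i j (s[j := y]))"
  show ?thesis
  proof (cases "penalised v \<and> children E v - {y} \<subseteq> set s")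
    case True
    have "D + 1 \<le> card (children E v)"
      using penalised_children v depth True by (simp add: v_def)
    then have "D \<le> card (children E v - {y})"
      using edge finite_children v by (simp add: v_def children_def card_Diff_singleton)
    then have "?b' + D \<le> ?b"
      using blockers_jump_occupied[OF s move toward] True by (simp add: v_def)
    then have "?b' \<le> ?b - D" "D \<le> ?b"
      by arith+
    then have "block ?b' + 1 \<le> block ?b"
      using block_mono[of ?b' "?b - D"] block_drop[of ?b] by simp
    with pot True show ?thesis
      by (simp add: exponent_def v v_def[symmetric])
  next
    case False
    have "block ?b' \<le> block ?b"
      using blockers_jump[OF move] finite_blockers by (simp add: block_mono card_mono)
    with pot False show ?thesis
      by (auto simp: exponent_def v v_def[symmetric])
  qed
qed

lemma Phi_jump_toward:
  assumes s: "admissible s" and move: "(j, y) \<in> moves E s" and depth: "depth (s ! j) < m"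
    and toward: "ancestor y (s ! i)"
  shows "Phi i j (s[j := y])
           \<le> Q powr (exponent i j s - (if penalised (s ! j) \<and> \<not> children E (s ! j) - {y} \<subseteq> set s then 1 else 0))"
proof -
  note edge = movesD[OF move]
  have "exponent i j (s[j := y]) \<le> 0" if "met i j (s[j := y])"
  proof -
    from that obtain x where "x \<in> level m" "ancestor x y"
      using edge by (auto simp: met_def)
    then have "m \<le> depth y"
      using depth_mono by (auto simp: level_def)
    with depth have "y \<in> level m"
      using edge edge_in_V depth_edge by (force simp: level_def)
    then have "pot y \<le> 0"
      by (rule pot_level)
    moreover have "pos j (s[j := y]) = y"
      using edge by (simp add: pos_def)
    ultimately show ?thesis
      using block_nonneg[of "card (blockers i j (s[j := y]))"] by (simp add: exponent_def)
  qed
  then have "Phi i j (s[j := y]) \<le> Q powr exponent i j (s[j := y])"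
    by (rule Phi_le_Q_powr)
  also have "\<dots> \<le> Q powr (exponent i j s - (if penalised (s ! j) \<and> \<not> children E (s ! j) - {y} \<subseteq> set s then 1 else 0))"
    using exponent_jump_toward[OF assms] by (intro Q_powr_antimono) simp
  finally show ?thesis .
qed

lemma Phi_jump_away:
  assumes move: "(j, y) \<in> moves E s" and depth: "depth (s ! j) < m" and away: "\<not> ancestor y (s ! i)"
  shows "Phi i j (s[j := y]) = 0"
proof -
  note edge = movesD[OF move]
  have "\<not> met i j (s[j := y])"
  proof
    assume "met i j (s[j := y])"
    then obtain x where x: "x \<in> level m" "ancestor x (s ! i)" "ancestor x y"
      using ij edge by (auto simp: met_def)
    then have "depth x \<le> depth y" "x \<in> V"
      using depth_mono by (auto simp: level_def)
    then have "x = y"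
      using x depth edge depth_edge ancestor_depth_eq by (force simp: level_def)
    with x away show False
      by simp
  qed
  moreover have "\<not> trails i j (s[j := y])"
    using away ij edge by (auto simp: trails_def)
  ultimately show ?thesis
    by (simp add: Phi_def)
qed

lemma Phi_jump_stuck:
  assumes s: "admissible s" and move: "(j, y) \<in> moves E s"
    and not_met: "\<not> met i j s" and not_trails: "\<not> trails i j s"
  shows "Phi i j (s[j := y]) = 0"
proof -
  note edge = movesD[OF move]
  define u v where "u = s ! i" and "v = s ! j"
  have vu: "v \<noteq> u"
    using s ij edge by (auto simp: admissible_def u_def v_def nth_eq_iff_index_eq)
  have stuck: "\<not> (depth v < m \<and> ancestor v u)"
    using not_trails vu edge by (auto simp: trails_def u_def v_def)
  have "\<not> met i j (s[j := y])"
  proof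
    assume "met i j (s[j := y])"
    then obtain x where x: "x \<in> level m" "ancestor x u" "ancestor x y"
      using ij edge by (auto simp: met_def u_def)
    then have "x = y \<or> ancestor x v"
      using ancestor_of_child edge by (auto simp: v_def)
    then show False
    proof
      assume "x = y"
      then show False
        using x stuck edge depth_edge by (auto simp: level_def v_def intro: converse_rtrancl_into_rtrancl)
    next
      assume "ancestor x v"
      then show False
        using not_met x edge by (auto simp: met_def u_def v_def)
    qed
  qed
  moreover have "\<not> trails i j (s[j := y])"
    using stuck edge depth_edge ij
    by (auto simp: trails_def u_def v_def intro: converse_rtrancl_into_rtrancl)
  ultimately show ?thesis
    by (simp add: Phi_def)
qed

lemma Phi_jump_le_unless_trailing:
  assumes s: "admissible s" and move: "x \<in> moves E s"
    and not_trailing: "\<not> (\<not> met i j s \<and> j < length s \<and> trails i j s)"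
  shows "Phi i j (s[fst x := snd x]) \<le> Phi i j s"
proof -
  obtain p y where x: "x = (p, y)"
    by (cases x)
  show ?thesis
  proof (cases "p = j")
    case True
    have "transition s (s[j := y])"
      using move x True unfolding transition_def by force
    then show ?thesis
      using x True not_trailing Phi_jump_stuck[OF s] move movesD met_transition
      by (cases "met i j s") (auto simp: Phi_def Phi_nonneg)
  qed (use Phi_jump_other[OF s] move x in auto)
qed

lemma Phi_jump_le_unless_toward:
  assumes s: "admissible s" and trailing: "depth (s ! j) < m" "ancestor (s ! j) (s ! i)" "j < length s"
    and c: "(s ! j, c) \<in> E" "ancestor c (s ! i)"
    and move: "(p, y) \<in> moves E s" "(p, y) \<noteq> (j, c)"
  shows "Phi i j (s[p := y]) \<le> Phi i j s"
proof (cases "p = j")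
  case True
  with move have y: "(s ! j, y) \<in> E" "y \<noteq> c"
    using movesD by auto
  have "\<not> ancestor y (s ! i)"
    using sibling_towards_unique[OF c(1) y(1) c(2)] y(2) by blast
  then have "Phi i j (s[j := y]) = 0"
    using Phi_jump_away[OF move(1)[unfolded True] trailing(1)] by blast
  then show ?thesis
    using Phi_nonneg True by simp
qed (use Phi_jump_other[OF s move(1)] in simp)

lemma Phi_jump_pair:
  assumes s: "admissible s" and trailing: "depth (s ! j) < m" "Phi i j s = Q powr exponent i j s"
    and c: "(s ! j, c) \<in> E" "ancestor c (s ! i)"
    and moves: "(j, c) \<in> moves E s" "(j, c') \<in> moves E s" "c' \<noteq> c"
  shows "jump_prob s (j, c) * Phi i j (s[j := c]) + jump_prob s (j, c') * Phi i j (s[j := c'])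
           \<le> (jump_prob s (j, c) + jump_prob s (j, c')) * Phi i j s"
proof -
  let ?a = "jump_prob s (j, c)" and ?b = "jump_prob s (j, c')" and ?F = "Phi i j s"
  have "Phi i j (s[j := c])
      \<le> Q powr (exponent i j s - (if penalised (s ! j) \<and> \<not> children E (s ! j) - {c} \<subseteq> set s then 1 else 0))"
    using Phi_jump_toward[OF s moves(1) trailing(1) c(2)] .
  also have "\<dots> \<le> Q powr (exponent i j s - 1)"
    by (rule Q_powr_antimono) simp
  finally have "Phi i j (s[j := c]) \<le> (1 + \<epsilon>) * ?F"
    by (simp add: Q_powr_diff_1 trailing(2))
  then have "?a * Phi i j (s[j := c]) \<le> ?a * ((1 + \<epsilon>) * ?F)"
    using jump_prob_nonneg[OF s] by (rule mult_left_mono)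
  also have "\<dots> = ?a * ?F + (\<epsilon> * ?a) * ?F"
    by (simp add: algebra_simps)
  also have "\<dots> \<le> ?a * ?F + ?b * ?F"
    using mult_right_mono[OF jump_prob_ratio[OF s moves(1,2)] Phi_nonneg] by simp
  moreover have "Phi i j (s[j := c']) = 0"
  proof (rule Phi_jump_away[OF moves(2) trailing(1)])
    have "(s ! j, c') \<in> E"
      using moves(2) movesD by blast
    then show "\<not> ancestor c' (s ! i)"
      using sibling_towards_unique[OF c(1) _ c(2)] moves(3) by blast
  qed
  ultimately show ?thesis
    by (simp add: distrib_right)
qed

lemma Phi_superharmonic:
  assumes s: "admissible s" and moves: "moves E s \<noteq> {}"
  shows "(\<Sum>x\<in>moves E s. jump_prob s x * Phi i j (s[fst x := snd x])) \<le> Phi i j s"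
proof (cases "\<not> met i j s \<and> j < length s \<and> trails i j s")
  case False
  have le: "Phi i j (s[fst x := snd x]) \<le> Phi i j s" if "x \<in> moves E s" for x
    using s that False by (rule Phi_jump_le_unless_trailing)
  show ?thesis
    by (rule sum_weighted_le[where K = "{}"])
       (use le in \<open>auto simp: finite_moves[OF s] jump_prob_nonneg[OF s] sum_jump_prob[OF s moves]\<close>)
next
  case True
  define v where "v = s ! j"
  have trailing: "depth v < m" "ancestor v (s ! i)" "v \<noteq> s ! i" "j < length s"
    using True by (auto simp: trails_def v_def)
  have Phi_s: "Phi i j s = Q powr exponent i j s"
    using True by (simp add: Phi_def)
  obtain c where c: "(v, c) \<in> E" "ancestor c (s ! i)"
    using ancestor_first_step trailing by blast
  have jump_j: "(j, y) \<in> moves E s \<longleftrightarrow> (v, y) \<in> E \<and> y \<notin> set s" for y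
    using trailing by (auto simp: moves_def v_def)
  have rest: "Phi i j (s[fst x := snd x]) \<le> Phi i j s" if "x \<in> moves E s" "x \<noteq> (j, c)" for x
    using Phi_jump_le_unless_toward[OF s _ _ _ _ _ , of c "fst x" "snd x"] that trailing c by (simp add: v_def)
  show ?thesis
  proof (cases "penalised v \<and> (j, c) \<in> moves E s \<and> (\<exists>c'. (v, c') \<in> E \<and> c' \<noteq> c \<and> c' \<notin> set s)")
    case False
    have "Phi i j (s[j := c]) \<le> Phi i j s" if "(j, c) \<in> moves E s"
    proof -
      have "\<not> (penalised v \<and> \<not> children E v - {c} \<subseteq> set s)"
        using False that by (auto simp: children_def)
      then have "(if penalised v \<and> \<not> children E v - {c} \<subseteq> set s then 1 else 0) = (0::int)"
        by (rule if_not_P)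
      then show ?thesis
        using Phi_jump_toward[OF s that] c trailing Phi_s by (simp add: v_def)
    qed
    then have le: "Phi i j (s[fst x := snd x]) \<le> Phi i j s" if "x \<in> moves E s" for x
      using rest that by (cases "x = (j, c)") auto
    show ?thesis
      by (rule sum_weighted_le[where K = "{}"])
         (use le in \<open>auto simp: finite_moves[OF s] jump_prob_nonneg[OF s] sum_jump_prob[OF s moves]\<close>)
  next
    case True
    then obtain c' where move_c: "(j, c) \<in> moves E s" and c': "(v, c') \<in> E" "c' \<noteq> c" "c' \<notin> set s"
      by blast
    have move_c': "(j, c') \<in> moves E s"
      using jump_j c' by blast
    have "jump_prob s (j, c) * Phi i j (s[j := c]) + jump_prob s (j, c') * Phi i j (s[j := c'])
        \<le> (jump_prob s (j, c) + jump_prob s (j, c')) * Phi i j s"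
      using Phi_jump_pair[OF s _ Phi_s _ c(2) move_c move_c' c'(2)] trailing c(1) by (simp add: v_def)
    then have pair: "(\<Sum>x\<in>{(j, c), (j, c')}. jump_prob s x * Phi i j (s[fst x := snd x]))
        \<le> (\<Sum>x\<in>{(j, c), (j, c')}. jump_prob s x) * Phi i j s"
      using c'(2) by simp
    show ?thesis
    proof (rule sum_weighted_le[where K = "{(j, c), (j, c')}"])
      show "Phi i j (s[fst x := snd x]) \<le> Phi i j s" if "x \<in> moves E s - {(j, c), (j, c')}" for x
        using rest that by blast
    qed (use pair move_c move_c' finite_moves[OF s] jump_prob_nonneg[OF s] sum_jump_prob[OF s moves] in simp_all)
  qed
qed

lemma prob_met_le:
  "measure_pmf.prob (tasep_run E r rt n ins N) {h. met i j (hd h)} \<le> Q powr (pot rt - block (n - 2))"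
proof -
  have "measure_pmf.prob (tasep_run E r rt n ins N) {h. met i j (hd h)} \<le> Phi i j []"
    by (rule prob_tasep_run_le[OF Phi_nonneg Phi_insert Phi_superharmonic]) (simp_all add: Phi_def)
  then show ?thesis
    by (simp add: Phi_initial)
qed

end

lemma not_distinct_gen_met:
  assumes h: "admissible_history h" and not_distinct: "\<not> distinct_gen E rt n m h"
  shows "\<exists>i j. i < j \<and> j < n \<and> met i j (hd h)"
proof -
  from not_distinct obtain a b x where ab: "a < n" "b < n" "a \<noteq> b" "x \<in> level m" "visits h a x" "visits h b x"
    by (auto simp: distinct_gen_def Zgen_eq_level)
  define i j where "i = min a b" and "j = max a b"
  have "visits h i x" "visits h j x"
    using ab by (auto simp: i_def j_def min_def max_def)
  then have "j < length (hd h)" "ancestor x (hd h ! i)" "ancestor x (hd h ! j)"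
    using h unfolding admissible_history_def by blast+
  then have "met i j (hd h)"
    using ab(4) unfolding met_def by blast
  moreover have "i < j" "j < n"
    using ab by (auto simp: i_def j_def)
  ultimately show ?thesis
    by blast
qed

lemma prob_not_distinct_gen_le:
  "measure_pmf.prob (tasep_run E r rt n ins N) {h. \<not> distinct_gen E rt n m h}
     \<le> real n ^ 2 * Q powr (pot rt - block (n - 2))"
proof -
  let ?M = "measure_pmf (tasep_run E r rt n ins N)"
  let ?bound = "Q powr (pot rt - block (n - 2))"
  define P where "P = {(i, j). i < j \<and> j < n}"
  define met_pair where "met_pair ij = {h. met (fst ij) (snd ij) (hd h)}" for ij
  have P_sub: "P \<subseteq> {..<n} \<times> {..<n}"
    by (auto simp: P_def)
  have finite_P: "finite P"
    using P_sub by (rule finite_subset) simp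
  have "card P \<le> card ({..<n} \<times> {..<n})"
    using P_sub by (intro card_mono) simp_all
  then have card_P: "real (card P) \<le> real n ^ 2"
    by (simp add: card_cartesian_product power2_eq_square flip: of_nat_mult)
  have sub: "{h. \<not> distinct_gen E rt n m h} \<inter> set_pmf (tasep_run E r rt n ins N) \<subseteq> (\<Union>ij\<in>P. met_pair ij)"
  proof
    fix h assume "h \<in> {h. \<not> distinct_gen E rt n m h} \<inter> set_pmf (tasep_run E r rt n ins N)"
    then obtain i j where "i < j" "j < n" "met i j (hd h)"
      using not_distinct_gen_met admissible_history_run by blast
    then show "h \<in> (\<Union>ij\<in>P. met_pair ij)"
      unfolding P_def met_pair_def by force
  qed
  have "measure ?M {h. \<not> distinct_gen E rt n m h}
      = measure ?M ({h. \<not> distinct_gen E rt n m h} \<inter> set_pmf (tasep_run E r rt n ins N))"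
    by (simp add: measure_Int_set_pmf)
  also have "\<dots> \<le> measure ?M (\<Union>ij\<in>P. met_pair ij)"
    using sub by (rule measure_pmf.finite_measure_mono) simp
  also have "\<dots> \<le> (\<Sum>ij\<in>P. measure ?M (met_pair ij))"
    using finite_P by (intro measure_pmf.finite_measure_subadditive_finite) auto
  also have "\<dots> \<le> (\<Sum>ij\<in>P. ?bound)"
    using prob_met_le by (intro sum_mono) (auto simp: P_def met_pair_def)
  also have "\<dots> \<le> real n ^ 2 * ?bound"
    using card_P Q_pos by (simp add: mult_right_mono)
  finally show ?thesis .
qed

end

section \<open>The two potentials\<close>

context tasep_ue
begin

lemma prob_not_distinct_gen_le_dmin_ge_2:
  assumes "dmin V E \<noteq> 1"
  shows "measure_pmf.prob (tasep_run E r rt n ins N) {h. \<not> distinct_gen E rt n m h}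
           \<le> real n ^ 2 * Q powr Fn V E rt n m"
proof -
  define D where "D = dmin V E - 1"
  have D: "1 \<le> D"
    using dmin_pos assms by (simp add: D_def)
  interpret branching_potential V E rt r n \<epsilon> m "\<lambda>x. int m - int (depth x)" "\<lambda>x. True" D "\<lambda>a. int (a div D)"
  proof unfold_locales
    show "int m - int (depth x) - (if True then 1 else 0) \<le> int m - int (depth c)" if "(x, c) \<in> E" for x c
      using depth_edge[OF that] by simp
    show "int m - int (depth x) \<le> 0" if "x \<in> level m" for x
      using that by (simp add: level_def)
    show "D + 1 \<le> card (children E x)" if "x \<in> V" for x
      using dmin_le[OF that] dmin_pos by (simp add: D_def)
    show "int (a div D) \<le> int (b div D)" if "a \<le> b" for a b
      using that by (simp add: div_le_mono)
    show "int ((a - D) div D) + 1 \<le> int (a div D)" if "D \<le> a" for a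
      using that D le_div_geq[of D a] by simp
  qed simp
  have "int ((n - 2) div D) \<le> int (n div D)"
    by (simp add: div_le_mono)
  also have "\<dots> = \<lfloor>real n / real D\<rfloor>"
    by (simp add: floor_divide_of_nat_eq)
  also have "\<dots> \<le> \<lceil>real n / real D\<rceil>"
    by simp
  finally have "int ((n - 2) div D) \<le> \<lceil>real n / real D\<rceil>" .
  then have "Fn V E rt n m \<le> int m - int (depth rt) - int ((n - 2) div D)"
    using assms by (simp add: Fn_def D_def)
  then have "Q powr (int m - int (depth rt) - int ((n - 2) div D)) \<le> Q powr Fn V E rt n m"
    by (intro Q_powr_antimono) simp
  with prob_not_distinct_gen_le[of ins N] show ?thesis
    by (meson mult_left_mono order_trans zero_le_power2)
qed

lemma prob_not_distinct_gen_le_dmin_1: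
  assumes "dmin V E = 1"
  shows "measure_pmf.prob (tasep_run E r rt n ins N) {h. \<not> distinct_gen E rt n m h}
           \<le> real n ^ 2 * Q powr Fn V E rt n m"
proof -
  interpret branching_potential V E rt r n \<epsilon> m "\<lambda>x. int (branch_pot m x)" branching 1 int
  proof unfold_locales
    show "int (branch_pot m x) - (if branching x then 1 else 0) \<le> int (branch_pot m c)"
      if "x \<in> V" "depth x < m" "(x, c) \<in> E" for x c
      using branch_pot_edge[OF that] by (cases "branching x") simp_all
    show "int (branch_pot m x) \<le> 0" if "x \<in> level m" for x
      using branch_pot_level[OF that] by simp
    show "1 + 1 \<le> card (children E x)" if "branching x" for x
      using that by (auto simp: branching_def udeg_def split: if_splits)
  qed simp_all
  have "Fn V E rt n m \<le> int (branch_pot m rt) - int (n - 2)"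
    using assms by (simp add: Fn_def Min_Fbr_eq_branch_pot)
  then have "Q powr (int (branch_pot m rt) - int (n - 2)) \<le> Q powr Fn V E rt n m"
    by (intro Q_powr_antimono) simp
  with prob_not_distinct_gen_le[of ins N] show ?thesis
    by (meson mult_left_mono order_trans zero_le_power2)
qed

end

theorem mainTheorem9:
  fixes V :: "'v set" and E :: "('v \<times> 'v) set" and rt :: 'v
    and r :: "'v \<Rightarrow> 'v \<Rightarrow> real" and \<epsilon> :: real and n m N :: nat
    and ins :: "'v list list \<Rightarrow> real"
  assumes tree: "rooted_tree V E rt"
    and no_leaves: "\<forall>x\<in>V. children E x \<noteq> {}"
    and rates_pos: "\<forall>(x, y)\<in>E. r x y > 0"
    and rates_bdd: "\<exists>R. \<forall>(x, y)\<in>E. r x y \<le> R"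
    and eps: "0 < \<epsilon>" "\<epsilon> \<le> 1"
    and UE: "\<forall>x y z. (x, y) \<in> E \<longrightarrow> (x, z) \<in> E \<longrightarrow> r x y / r x z \<ge> \<epsilon>"
  shows "measure_pmf.prob (tasep_run E r rt n ins N) {h. distinct_gen E rt n m h}
           \<ge> 1 - real n ^ 2 * (1 / (1 + \<epsilon>)) powr real_of_int (Fn V E rt n m)"
proof -
  interpret tasep_ue V E rt r n \<epsilon>
    using tree no_leaves rates_pos eps(1) UE by unfold_locales
  let ?M = "tasep_run E r rt n ins N"
  have bound: "measure_pmf.prob ?M {h. \<not> distinct_gen E rt n m h} \<le> real n ^ 2 * Q powr Fn V E rt n m"
    using prob_not_distinct_gen_le_dmin_ge_2 prob_not_distinct_gen_le_dmin_1 by blast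
  have "{h. distinct_gen E rt n m h} = space (measure_pmf ?M) - {h. \<not> distinct_gen E rt n m h}"
    by auto
  then have "measure_pmf.prob ?M {h. distinct_gen E rt n m h} = 1 - measure_pmf.prob ?M {h. \<not> distinct_gen E rt n m h}"
    using measure_pmf.prob_compl by simp
  with bound show ?thesis
    by (simp add: Q_def)
qed

end
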